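(* Let $m\ge1$, let $k_1,k_2\ge0$ be integers and $r_1,r_2>0$ with $r_1^2+r_2^2=1$. Let $F_1:\mathbb{R}^{m+1}\to\mathbb{R}^{n_1+1}$ and $F_2:\mathbb{R}^{m+1}\to\mathbb{R}^{n_2+1}$ be harmonic forms of degrees $k_1$, $k_2$ (each component a harmonic homogeneous polynomial of that degree) with $|F_i(\bar x)|^2=r_i^2|\bar x|^{2k_i}$, restricting to $\varphi_1:\mathbb{S}^m\to\mathbb{S}^{n_1}(r_1)$, $\varphi_2:\mathbb{S}^m\to\mathbb{S}^{n_2}(r_2)$, and let $\varphi=\iota\circ(\varphi_1,\varphi_2):\mathbb{S}^m\to\mathbb{S}^{n_1+n_2+1}$, where $\iota$ is the canonical inclusion of $\mathbb{S}^{n_1}(r_1)\times\mathbb{S}^{n_2}(r_2)$ into $\mathbb{S}^{n_1+n_2+1}$. Then $\varphi$ is proper biharmonic if and only if $r_1=r_2=1/\sqrt2$ and $k_1\neq k_2$.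
   Context: $\mathbb{S}^n(r)$ is the sphere of radius $r$ centred at $0$, $\mathbb{S}^m$ the unit sphere. Tension field $\tau(\varphi)=\operatorname{trace}\nabla d\varphi$; bitension field $\tau_2(\varphi)=-\Delta\tau(\varphi)-\operatorname{trace}R^N(d\varphi(\cdot),\tau(\varphi))d\varphi(\cdot)$ with $\Delta=-\operatorname{trace}\nabla^2$. Proper biharmonic means $\tau_2(\varphi)=0$ but $\tau(\varphi)\neq0$. *)

theory Defs
  imports "HOL-Analysis.Analysis"
begin

text \<open>The domain is the unit sphere
  S^m = sphere 0 1 in a Euclidean space 'a with DIM('a) = m+1.  The target
  S^(n1+n2+1) is the unit sphere in the product space 'b \<times> 'c, where
  DIM('b) = n1+1 and DIM('c) = n2+1.  Riemannian notions for a map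
  phi from S^m into the unit sphere of the target are written out via the
  ambient space: the Levi-Civita connection of the target sphere is the
  tangential projection of the ambient derivative, and the traces of the
  second covariant derivatives are evaluated along geodesics of S^m issued in
  the directions of an orthonormal basis of the tangent space.\<close>

definition tproj :: "'b::real_inner \<Rightarrow> 'b \<Rightarrow> 'b" where
  "tproj p v = v - (v \<bullet> p) *\<^sub>R p"

definition geod :: "'a::real_vector \<Rightarrow> 'a \<Rightarrow> real \<Rightarrow> 'a" where
  "geod x e t = cos t *\<^sub>R x + sin t *\<^sub>R e"

definition tangent_onb :: "'a::euclidean_space \<Rightarrow> 'a set" where
  "tangent_onb x = (SOME B. B \<subseteq> {e. e \<bullet> x = 0} \<and> pairwise orthogonal B \<and>
      (\<forall>e\<in>B. norm e = 1) \<and> span B = {e. e \<bullet> x = 0})"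

definition dmap :: "('a::euclidean_space \<Rightarrow> 'b::real_normed_vector) \<Rightarrow> 'a \<Rightarrow> 'a \<Rightarrow> 'b" where
  "dmap phi x e = vector_derivative (\<lambda>t. phi (geod x e t)) (at 0)"

definition second_along :: "('a::euclidean_space \<Rightarrow> 'b::real_normed_vector) \<Rightarrow> 'a \<Rightarrow> 'a \<Rightarrow> 'b" where
  "second_along phi x e =
     vector_derivative (\<lambda>t. vector_derivative (\<lambda>s. phi (geod x e s)) (at t)) (at 0)"

definition tension :: "('a::euclidean_space \<Rightarrow> 'b::real_inner) \<Rightarrow> 'a \<Rightarrow> 'b" where
  "tension phi x = (\<Sum>e\<in>tangent_onb x. tproj (phi x) (second_along phi x e))"

definition covd_along :: "('a::euclidean_space \<Rightarrow> 'b::real_inner) \<Rightarrow> ('a \<Rightarrow> 'b) \<Rightarrow> 'a \<Rightarrow> 'a \<Rightarrow> real \<Rightarrow> 'b" where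
  "covd_along phi V x e t =
     tproj (phi (geod x e t)) (vector_derivative (\<lambda>s. V (geod x e s)) (at t))"

text \<open>trace (nabla^phi)^2 V, i.e. minus the rough Laplacian.\<close>
definition rough_trace :: "('a::euclidean_space \<Rightarrow> 'b::real_inner) \<Rightarrow> ('a \<Rightarrow> 'b) \<Rightarrow> 'a \<Rightarrow> 'b" where
  "rough_trace phi V x =
     (\<Sum>e\<in>tangent_onb x. tproj (phi x) (vector_derivative (covd_along phi V x e) (at 0)))"

definition sphere_curv :: "'b::real_inner \<Rightarrow> 'b \<Rightarrow> 'b \<Rightarrow> 'b" where
  "sphere_curv u v w = (v \<bullet> w) *\<^sub>R u - (u \<bullet> w) *\<^sub>R v"

text \<open>Bitension field tau_2 = - Delta tau - trace R(d phi, tau) d phi, with Delta = - trace nabla^2.\<close>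
definition bitension :: "('a::euclidean_space \<Rightarrow> 'b::real_inner) \<Rightarrow> 'a \<Rightarrow> 'b" where
  "bitension phi x = rough_trace phi (tension phi) x
     - (\<Sum>e\<in>tangent_onb x. sphere_curv (dmap phi x e) (tension phi x) (dmap phi x e))"

definition proper_biharmonic :: "('a::euclidean_space \<Rightarrow> 'b::real_inner) \<Rightarrow> bool" where
  "proper_biharmonic phi \<longleftrightarrow>
     (\<forall>x\<in>sphere 0 1. bitension phi x = 0) \<and> \<not> (\<forall>x\<in>sphere 0 1. tension phi x = 0)"

definition homogeneous_deg :: "nat \<Rightarrow> ('a::real_vector \<Rightarrow> real) \<Rightarrow> bool" where
  "homogeneous_deg k f \<longleftrightarrow> (\<forall>t x. f (t *\<^sub>R x) = t ^ k * f x)"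

definition euclid_laplacian :: "('a::euclidean_space \<Rightarrow> real) \<Rightarrow> 'a \<Rightarrow> real" where
  "euclid_laplacian f x = (\<Sum>b\<in>Basis. deriv (\<lambda>t. deriv (\<lambda>s. f (x + s *\<^sub>R b)) t) 0)"

definition harmonic_form :: "nat \<Rightarrow> ('a::euclidean_space \<Rightarrow> 'b::euclidean_space) \<Rightarrow> bool" where
  "harmonic_form k F \<longleftrightarrow> (\<forall>b\<in>Basis.
      real_polynomial_function (\<lambda>x. F x \<bullet> b) \<and> homogeneous_deg k (\<lambda>x. F x \<bullet> b) \<and>
      (\<forall>x. euclid_laplacian (\<lambda>y. F y \<bullet> b) x = 0))"

end

theory Submission
  imports Defs
begin

text \<open>Restricted to a great circle through \<open>x\<close> in a tangent direction \<open>e\<close>, a function has second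
  derivative equal to its Hessian at \<open>(e, e)\<close> minus its radial derivative at \<open>x\<close>. Summing over an
  orthonormal tangent frame, Euler's identity and harmonicity show that each \<open>F\<^sub>i\<close> restricts to an
  eigenmap of the Laplacian of \<open>S\<^sup>m\<close> with eigenvalue \<open>L\<^sub>i = k\<^sub>i (k\<^sub>i + m - 1)\<close>. As \<open>|F\<^sub>i| = r\<^sub>i\<close> on
  the sphere, the derivatives of \<open>F\<^sub>i\<close> are orthogonal to \<open>F\<^sub>i\<close> and \<open>|d\<phi>|\<^sup>2 = L\<^sub>1 r\<^sub>1\<^sup>2 + L\<^sub>2 r\<^sub>2\<^sup>2\<close>.
  Projecting to the unit sphere then gives
  \<open>\<tau>(\<phi>) = (r\<^sub>2\<^sup>2 (L\<^sub>2 - L\<^sub>1) F\<^sub>1, r\<^sub>1\<^sup>2 (L\<^sub>1 - L\<^sub>2) F\<^sub>2)\<close> and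
  \<open>\<tau>\<^sub>2(\<phi>) = (r\<^sub>2\<^sup>2 (L\<^sub>2 - L\<^sub>1)\<^sup>2 (r\<^sub>2\<^sup>2 - r\<^sub>1\<^sup>2) F\<^sub>1, r\<^sub>1\<^sup>2 (L\<^sub>1 - L\<^sub>2)\<^sup>2 (r\<^sub>1\<^sup>2 - r\<^sub>2\<^sup>2) F\<^sub>2)\<close>,
  so \<open>\<phi>\<close> is proper biharmonic iff \<open>r\<^sub>1 = r\<^sub>2\<close> and \<open>L\<^sub>1 \<noteq> L\<^sub>2\<close>; and \<open>L\<close> is injective in \<open>k\<close>.\<close>

lemma trace_bilinear_orthonormal_basis:
  fixes H :: "'a::euclidean_space \<Rightarrow> 'a \<Rightarrow> real"
  assumes H: "bilinear H"
    and B: "finite B" "pairwise orthogonal B" "\<And>e. e \<in> B \<Longrightarrow> norm e = 1" "span B = UNIV"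
  shows "(\<Sum>b\<in>Basis. H b b) = (\<Sum>e\<in>B. H e e)"
proof -
  have linear_left: "linear (\<lambda>v. H v w)" and linear_right: "linear (H v)" for v w
    using H by (simp_all add: bilinear_def)
  have "(\<Sum>b\<in>Basis. H b b) = (\<Sum>b\<in>Basis. H b (\<Sum>e\<in>B. (b \<bullet> e) *\<^sub>R e))"
    using orthonormal_basis_expand[OF B(2,3)] B(1,4) by simp
  also have "\<dots> = (\<Sum>e\<in>B. \<Sum>b\<in>Basis. (e \<bullet> b) * H b e)"
    by (subst sum.swap) (simp add: linear_sum[OF linear_right] linear_scale[OF linear_right] inner_commute)
  also have "\<dots> = (\<Sum>e\<in>B. H (\<Sum>b\<in>Basis. (e \<bullet> b) *\<^sub>R b) e)"
    by (simp add: linear_sum[OF linear_left] linear_scale[OF linear_left])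
  also have "\<dots> = (\<Sum>e\<in>B. H e e)"
    by (simp add: euclidean_representation)
  finally show ?thesis .
qed

lemma tangent_onb:
  fixes x :: "'a::euclidean_space"
  assumes "x \<noteq> 0"
  shows "tangent_onb x \<subseteq> {e. e \<bullet> x = 0}" "pairwise orthogonal (tangent_onb x)"
    "\<And>e. e \<in> tangent_onb x \<Longrightarrow> norm e = 1" "span (tangent_onb x) = {e. e \<bullet> x = 0}"
    "finite (tangent_onb x)" "card (tangent_onb x) = DIM('a) - 1"
proof -
  let ?P = "\<lambda>B. B \<subseteq> {e. e \<bullet> x = 0} \<and> pairwise orthogonal B \<and>
      (\<forall>e\<in>B. norm e = 1) \<and> span B = {e. e \<bullet> x = 0}"
  have "\<exists>B. ?P B"
    by (rule orthonormal_basis_subspace[OF subspace_hyperplane2[of x]]) blast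
  then have P: "?P (tangent_onb x)"
    unfolding tangent_onb_def by (rule someI_ex)
  then show "tangent_onb x \<subseteq> {e. e \<bullet> x = 0}" "pairwise orthogonal (tangent_onb x)"
    "\<And>e. e \<in> tangent_onb x \<Longrightarrow> norm e = 1" "span (tangent_onb x) = {e. e \<bullet> x = 0}"
    by auto
  have independent: "independent (tangent_onb x)"
    using P by (intro pairwise_orthogonal_independent) auto
  then show "finite (tangent_onb x)"
    by (rule independent_imp_finite)
  have "card (tangent_onb x) = dim {e. x \<bullet> e = 0}"
    using dim_span_eq_card_independent[OF independent] P by (simp add: inner_commute)
  then show "card (tangent_onb x) = DIM('a) - 1"
    using dim_hyperplane[OF assms] by simp
qed

lemma orthonormal_basis_insert_tangent_onb:
  fixes x :: "'a::euclidean_space"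
  assumes x: "norm x = 1"
  shows "x \<notin> tangent_onb x" "finite (insert x (tangent_onb x))"
    "pairwise orthogonal (insert x (tangent_onb x))"
    "\<And>e. e \<in> insert x (tangent_onb x) \<Longrightarrow> norm e = 1"
    "span (insert x (tangent_onb x)) = UNIV"
proof -
  have "x \<noteq> 0" using x by auto
  note T = tangent_onb[OF this]
  show "x \<notin> tangent_onb x" "finite (insert x (tangent_onb x))"
    "\<And>e. e \<in> insert x (tangent_onb x) \<Longrightarrow> norm e = 1"
    using T(1,3,5) x by (auto simp: norm_eq_1)
  show "pairwise orthogonal (insert x (tangent_onb x))"
    using T(1,2) by (auto simp: pairwise_insert orthogonal_def inner_commute)
  have "v \<in> span (insert x (tangent_onb x))" for v
  proof -
    have "v - (v \<bullet> x) *\<^sub>R x \<in> span (tangent_onb x)"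
      using T(4) x by (simp add: inner_diff_left norm_eq_1)
    then have "v - (v \<bullet> x) *\<^sub>R x \<in> span (insert x (tangent_onb x))"
      by (meson span_mono subset_insertI subsetD)
    moreover have "(v \<bullet> x) *\<^sub>R x \<in> span (insert x (tangent_onb x))"
      by (simp add: span_base span_mul)
    ultimately show ?thesis
      using span_add by fastforce
  qed
  then show "span (insert x (tangent_onb x)) = UNIV" by auto
qed

lemma has_real_derivative_comp_curve:
  fixes g :: "'a::real_normed_vector \<Rightarrow> real"
  assumes "(g has_derivative G) (at (c t))" and "(c has_vector_derivative c') (at t)"
  shows "((\<lambda>t. g (c t)) has_real_derivative G c') (at t)"
  using vector_derivative_diff_chain_within[OF assms(2) has_derivative_at_withinI[OF assms(1)]]
  by (simp add: has_real_derivative_iff_has_vector_derivative o_def)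

lemma geod_0 [simp]: "geod x e 0 = x"
  by (simp add: geod_def)

lemma geod_has_vector_derivative:
  "(geod x e has_vector_derivative (- sin t *\<^sub>R x + cos t *\<^sub>R e)) (at t)"
  unfolding geod_def by (auto intro!: derivative_eq_intros)

lemma norm_geod:
  fixes x e :: "'a::real_inner"
  assumes "norm x = 1" "norm e = 1" "e \<bullet> x = 0"
  shows "norm (geod x e t) = 1"
proof -
  have "geod x e t \<bullet> geod x e t = (cos t)\<^sup>2 + (sin t)\<^sup>2"
    using assms
    by (simp add: geod_def inner_add_left inner_add_right inner_commute norm_eq_1 power2_eq_square)
  then show ?thesis by (simp add: norm_eq_1)
qed

lemma norm_geod_tangent_onb:
  assumes "norm x = 1" "e \<in> tangent_onb x"
  shows "norm (geod x e t) = 1"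
proof -
  have "x \<noteq> 0" using assms(1) by auto
  then show ?thesis
    using norm_geod[OF assms(1)] tangent_onb(1,3) assms(2) by blast
qed

lemma has_real_derivative_inner:
  fixes f g :: "real \<Rightarrow> 'b::real_inner"
  assumes "(f has_vector_derivative f') (at t)" "(g has_vector_derivative g') (at t)"
  shows "((\<lambda>t. f t \<bullet> g t) has_real_derivative (f t \<bullet> g' + f' \<bullet> g t)) (at t)"
proof -
  have "((\<lambda>t. f t \<bullet> g t) has_derivative (\<lambda>h. f t \<bullet> (h *\<^sub>R g') + (h *\<^sub>R f') \<bullet> g t)) (at t)"
    using assms by (intro has_derivative_inner) (auto simp: has_vector_derivative_def)
  moreover have "(\<lambda>h. f t \<bullet> (h *\<^sub>R g') + (h *\<^sub>R f') \<bullet> g t) = (*) (f t \<bullet> g' + f' \<bullet> g t)"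
    by (auto simp: algebra_simps)
  ultimately show ?thesis
    by (simp add: has_field_derivative_def)
qed

lemma constant_norm_curve_derivatives:
  fixes g :: "real \<Rightarrow> 'b::real_inner"
  assumes g': "\<And>t. (g has_vector_derivative g' t) (at t)"
    and g'': "(g' has_vector_derivative g'') (at 0)"
    and "\<And>t. g t \<bullet> g t = c"
  shows "g t \<bullet> g' t = 0" "g' 0 \<bullet> g' 0 + g 0 \<bullet> g'' = 0"
proof -
  have orthogonal: "g t \<bullet> g' t = 0" for t
  proof -
    have "((\<lambda>t. g t \<bullet> g t) has_real_derivative (g t \<bullet> g' t + g' t \<bullet> g t)) (at t)"
      by (rule has_real_derivative_inner[OF g' g'])
    moreover have "((\<lambda>t. g t \<bullet> g t) has_real_derivative 0) (at t)"
      using assms(3) by simp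
    ultimately show ?thesis
      using DERIV_unique by (fastforce simp: inner_commute)
  qed
  then show "g t \<bullet> g' t = 0" .
  have "((\<lambda>t. g t \<bullet> g' t) has_real_derivative (g 0 \<bullet> g'' + g' 0 \<bullet> g' 0)) (at 0)"
    by (rule has_real_derivative_inner[OF g' g''])
  moreover have "((\<lambda>t. g t \<bullet> g' t) has_real_derivative 0) (at 0)"
    using orthogonal by simp
  ultimately show "g' 0 \<bullet> g' 0 + g 0 \<bullet> g'' = 0"
    using DERIV_unique by fastforce
qed

lemma real_polynomial_function_has_derivative:
  fixes p :: "'a::real_normed_vector \<Rightarrow> real"
  assumes "real_polynomial_function p"
  obtains D where "\<And>y. (p has_derivative D y) (at y)"
    and "\<And>v. real_polynomial_function (\<lambda>y. D y v)"
proof -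
  have "\<exists>D. (\<forall>y. (p has_derivative D y) (at y)) \<and> (\<forall>v. real_polynomial_function (\<lambda>y. D y v))"
    using assms
  proof (induction rule: real_polynomial_function.induct)
    case (linear f)
    then show ?case
      by (intro exI[of _ "\<lambda>y. f"]) (auto intro: bounded_linear_imp_has_derivative)
  next
    case (const c)
    then show ?case
      by (intro exI[of _ "\<lambda>y v. 0"]) auto
  next
    case (add f g)
    then obtain Df Dg
      where "\<forall>y. (f has_derivative Df y) (at y)" "\<forall>v. real_polynomial_function (\<lambda>y. Df y v)"
        and "\<forall>y. (g has_derivative Dg y) (at y)" "\<forall>v. real_polynomial_function (\<lambda>y. Dg y v)"
      by blast
    then show ?case
      by (intro exI[of _ "\<lambda>y v. Df y v + Dg y v"]) (auto intro: has_derivative_add)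
  next
    case (mult f g)
    then obtain Df Dg
      where "\<forall>y. (f has_derivative Df y) (at y)" "\<forall>v. real_polynomial_function (\<lambda>y. Df y v)"
        and "\<forall>y. (g has_derivative Dg y) (at y)" "\<forall>v. real_polynomial_function (\<lambda>y. Dg y v)"
      by blast
    with mult.hyps show ?case
      by (intro exI[of _ "\<lambda>y v. f y * Dg y v + Df y v * g y"])
        (auto intro!: has_derivative_mult real_polynomial_function.intros(3,4))
  qed
  then show ?thesis
    using that by blast
qed

lemma linear_second_derivative_direction:
  assumes D: "\<And>y. (f has_derivative D y) (at y)"
    and D2: "\<And>v y. ((\<lambda>y. D y v) has_derivative D2 v y) (at y)"
  shows "linear (\<lambda>v. D2 v y w)"
proof -
  have linear_D: "linear (D y)" for y
    using D has_derivative_linear by blast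
  have "D2 (v1 + v2) y = (\<lambda>w. D2 v1 y w + D2 v2 y w)" for v1 v2
  proof -
    have "((\<lambda>z. D z (v1 + v2)) has_derivative (\<lambda>w. D2 v1 y w + D2 v2 y w)) (at y)"
      using has_derivative_add[OF D2[of v1 y] D2[of v2 y]] by (simp add: linear_add[OF linear_D])
    then show ?thesis
      using D2 has_derivative_unique by blast
  qed
  moreover have "D2 (c *\<^sub>R v) y = (\<lambda>w. c *\<^sub>R D2 v y w)" for c v
  proof -
    have "((\<lambda>z. D z (c *\<^sub>R v)) has_derivative (\<lambda>w. c *\<^sub>R D2 v y w)) (at y)"
      using has_derivative_scaleR_right[OF D2[of v y], of c] by (simp add: linear_scale[OF linear_D])
    then show ?thesis
      using D2 has_derivative_unique by blast
  qed
  ultimately show ?thesis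
    by (intro linearI) simp_all
qed

lemma homogeneous_deg_radial_derivative:
  fixes f :: "'a::real_normed_vector \<Rightarrow> real"
  assumes hom: "homogeneous_deg k f" and D: "\<And>y. (f has_derivative D y) (at y)"
  shows "D (t *\<^sub>R x) x = real k * t ^ (k - 1) * f x"
proof -
  have "((\<lambda>t. f (t *\<^sub>R x)) has_real_derivative D (t *\<^sub>R x) x) (at t)"
    by (rule has_real_derivative_comp_curve[OF D]) (auto intro!: derivative_eq_intros)
  moreover have "((\<lambda>t. f (t *\<^sub>R x)) has_real_derivative real k * t ^ (k - 1) * f x) (at t)"
    using hom unfolding homogeneous_deg_def by (auto intro!: derivative_eq_intros)
  ultimately show ?thesis
    by (rule DERIV_unique)
qed

lemma homogeneous_deg_second_radial_derivative:
  fixes f :: "'a::real_normed_vector \<Rightarrow> real"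
  assumes hom: "homogeneous_deg k f" and D: "\<And>y. (f has_derivative D y) (at y)"
    and D2: "\<And>y. ((\<lambda>y. D y x) has_derivative D2 y) (at y)"
  shows "D2 x x = real k * (real k - 1) * f x"
proof -
  have "((\<lambda>t. D (t *\<^sub>R x) x) has_real_derivative D2 (1 *\<^sub>R x) x) (at 1)"
    by (rule has_real_derivative_comp_curve[OF D2]) (auto intro!: derivative_eq_intros)
  moreover have "((\<lambda>t. D (t *\<^sub>R x) x) has_real_derivative real k * (real k - 1) * f x) (at 1)"
  proof -
    have "((\<lambda>t. real k * t ^ (k - 1) * f x) has_real_derivative
        real k * (real (k - 1) * 1 ^ (k - 1 - 1)) * f x) (at 1)"
      by (auto intro!: derivative_eq_intros)
    then show ?thesis
      by (cases k) (simp_all add: homogeneous_deg_radial_derivative[OF hom D])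
  qed
  ultimately show ?thesis
    using DERIV_unique by fastforce
qed

lemma euclid_laplacian_eq_trace:
  fixes f :: "'a::euclidean_space \<Rightarrow> real"
  assumes D: "\<And>y. (f has_derivative D y) (at y)"
    and D2: "\<And>v y. ((\<lambda>y. D y v) has_derivative D2 v y) (at y)"
  shows "euclid_laplacian f x = (\<Sum>b\<in>Basis. D2 b x b)"
  unfolding euclid_laplacian_def
proof (rule sum.cong[OF refl])
  fix b :: 'a
  have line: "((\<lambda>t. x + t *\<^sub>R b) has_vector_derivative b) (at t)" for t
    by (auto intro!: derivative_eq_intros)
  have "deriv (\<lambda>s. f (x + s *\<^sub>R b)) = (\<lambda>t. D (x + t *\<^sub>R b) b)"
    using DERIV_imp_deriv[OF has_real_derivative_comp_curve[OF D line]] by auto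
  moreover have "((\<lambda>t. D (x + t *\<^sub>R b) b) has_real_derivative D2 b (x + 0 *\<^sub>R b) b) (at 0)"
    by (rule has_real_derivative_comp_curve[OF D2 line])
  ultimately show "deriv (\<lambda>t. deriv (\<lambda>s. f (x + s *\<^sub>R b)) t) 0 = D2 b x b"
    using DERIV_imp_deriv by fastforce
qed

text \<open>The term \<open>- D x x\<close> comes from the centripetal acceleration \<open>-x\<close> of the great circle.\<close>

lemma great_circle_derivatives:
  fixes f :: "'a::real_normed_vector \<Rightarrow> real"
  assumes D: "\<And>y. (f has_derivative D y) (at y)"
    and D2: "\<And>v y. ((\<lambda>y. D y v) has_derivative D2 v y) (at y)"
  shows "((\<lambda>t. f (geod x e t)) has_real_derivative
      D (geod x e t) (- sin t *\<^sub>R x + cos t *\<^sub>R e)) (at t)"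
    and "((\<lambda>t. D (geod x e t) (- sin t *\<^sub>R x + cos t *\<^sub>R e)) has_real_derivative
      D2 e x e - D x x) (at 0)"
proof -
  show "((\<lambda>t. f (geod x e t)) has_real_derivative
      D (geod x e t) (- sin t *\<^sub>R x + cos t *\<^sub>R e)) (at t)"
    by (rule has_real_derivative_comp_curve[OF D geod_has_vector_derivative])
  have linear_D: "linear (D y)" for y
    using D has_derivative_linear by blast
  have "(\<lambda>t. D (geod x e t) (- sin t *\<^sub>R x + cos t *\<^sub>R e)) =
      (\<lambda>t. cos t * D (geod x e t) e - sin t * D (geod x e t) x)"
    by (simp add: linear_diff[OF linear_D] linear_scale[OF linear_D])
  moreover have "((\<lambda>t. D (geod x e t) v) has_real_derivative D2 v x e) (at 0)" for v
  proof -
    have "((\<lambda>t. D (geod x e t) v) has_real_derivative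
        D2 v (geod x e 0) (- sin 0 *\<^sub>R x + cos 0 *\<^sub>R e)) (at 0)"
      by (rule has_real_derivative_comp_curve[OF D2 geod_has_vector_derivative])
    then show ?thesis by simp
  qed
  ultimately show "((\<lambda>t. D (geod x e t) (- sin t *\<^sub>R x + cos t *\<^sub>R e)) has_real_derivative
      D2 e x e - D x x) (at 0)"
    by (auto intro!: derivative_eq_intros simp: linear_D)
qed

text \<open>For the ambient dimension \<open>n = m + 1\<close> this is the eigenvalue \<open>k (k + m - 1)\<close> of the
  Laplacian of \<open>S\<^sup>m\<close> on spherical harmonics of degree \<open>k\<close>.\<close>

definition harmonic_eigenvalue :: "nat \<Rightarrow> nat \<Rightarrow> real" where
  "harmonic_eigenvalue n k = real k * (real k + real n - 2)"

lemma harmonic_eigenvalue_eq_iff: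
  assumes "n \<ge> 2"
  shows "harmonic_eigenvalue n k1 = harmonic_eigenvalue n k2 \<longleftrightarrow> k1 = k2"
proof
  assume "harmonic_eigenvalue n k1 = harmonic_eigenvalue n k2"
  then have "(real k2 - real k1) * (real k1 + real k2 + real n - 2) = 0"
    unfolding harmonic_eigenvalue_def by algebra
  then show "k1 = k2"
    using assms by (cases "k1 = 0 \<and> k2 = 0") auto
qed simp

lemma trace_great_circle_harmonic_homogeneous:
  fixes f :: "'a::euclidean_space \<Rightarrow> real"
  assumes hom: "homogeneous_deg k f" and harmonic: "euclid_laplacian f x = 0"
    and D: "\<And>y. (f has_derivative D y) (at y)"
    and D2: "\<And>v y. ((\<lambda>y. D y v) has_derivative D2 v y) (at y)"
    and x: "norm x = 1"
  shows "(\<Sum>e\<in>tangent_onb x. D2 e x e - D x x) = - harmonic_eigenvalue DIM('a) k * f x"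
proof -
  note B = orthonormal_basis_insert_tangent_onb[OF x]
  have "bilinear (\<lambda>v. D2 v x)"
    unfolding bilinear_def
    using linear_second_derivative_direction[OF D D2] D2 has_derivative_linear by blast
  then have "euclid_laplacian f x = (\<Sum>e\<in>insert x (tangent_onb x). D2 e x e)"
    unfolding euclid_laplacian_eq_trace[OF D D2] by (rule trace_bilinear_orthonormal_basis[OF _ B(2-5)])
  also have "\<dots> = real k * (real k - 1) * f x + (\<Sum>e\<in>tangent_onb x. D2 e x e)"
    using B(1,2) homogeneous_deg_second_radial_derivative[OF hom D D2] by simp
  finally have trace_D2: "(\<Sum>e\<in>tangent_onb x. D2 e x e) = - (real k * (real k - 1) * f x)"
    using harmonic by linarith
  have "x \<noteq> 0"
    using x by auto
  then have card: "real (card (tangent_onb x)) = real DIM('a) - 1"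
    using DIM_positive[where 'a='a] by (simp add: tangent_onb(6) of_nat_diff)
  have "(\<Sum>e\<in>tangent_onb x. D2 e x e - D x x) =
      (\<Sum>e\<in>tangent_onb x. D2 e x e) - real (card (tangent_onb x)) * D x x"
    by (simp add: sum_subtractf)
  also have "\<dots> = - (real k * (real k - 1) * f x) - (real DIM('a) - 1) * (real k * f x)"
    using homogeneous_deg_radial_derivative[OF hom D, of 1] by (simp add: trace_D2 card)
  also have "\<dots> = - harmonic_eigenvalue DIM('a) k * f x"
    by (simp add: harmonic_eigenvalue_def algebra_simps)
  finally show ?thesis .
qed

text \<open>Along great circles, the second derivatives of the restriction of \<open>F\<close> to the unit sphere
  trace to its Laplace-Beltrami operator; \<open>F\<close> is thus an eigenmap with eigenvalue \<open>L\<close>.\<close>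

locale great_circle_eigenmap =
  fixes F :: "'a::euclidean_space \<Rightarrow> 'b::real_normed_vector"
    and V :: "'a \<Rightarrow> 'a \<Rightarrow> real \<Rightarrow> 'b" and W :: "'a \<Rightarrow> 'a \<Rightarrow> 'b"
    and L :: real
  assumes has_velocity: "\<And>x e t. ((\<lambda>t. F (geod x e t)) has_vector_derivative V x e t) (at t)"
    and has_acceleration: "\<And>x e. (V x e has_vector_derivative W x e) (at 0)"
    and trace_acceleration: "\<And>x. norm x = 1 \<Longrightarrow> (\<Sum>e\<in>tangent_onb x. W x e) = - L *\<^sub>R F x"

lemma harmonic_polynomial_great_circle_eigenmap:
  fixes p :: "'a::euclidean_space \<Rightarrow> real"
  assumes "real_polynomial_function p" "homogeneous_deg k p" "\<forall>y. euclid_laplacian p y = 0"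
  shows "\<exists>v w. great_circle_eigenmap p v w (harmonic_eigenvalue DIM('a) k)"
proof -
  obtain D where D: "\<And>y. (p has_derivative D y) (at y)"
    and D_polynomial: "\<And>v. real_polynomial_function (\<lambda>y. D y v)"
    using real_polynomial_function_has_derivative assms(1) by blast
  have "\<forall>v. \<exists>D2v. \<forall>y. ((\<lambda>y. D y v) has_derivative D2v y) (at y)"
    using real_polynomial_function_has_derivative[OF D_polynomial] by metis
  then obtain D2 where D2: "\<And>v y. ((\<lambda>y. D y v) has_derivative D2 v y) (at y)"
    by metis
  have "great_circle_eigenmap p (\<lambda>x e t. D (geod x e t) (- sin t *\<^sub>R x + cos t *\<^sub>R e))
      (\<lambda>x e. D2 e x e - D x x) (harmonic_eigenvalue DIM('a) k)"
  proof
    show "((\<lambda>t. p (geod x e t)) has_vector_derivative D (geod x e t) (- sin t *\<^sub>R x + cos t *\<^sub>R e)) (at t)"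
      "((\<lambda>t. D (geod x e t) (- sin t *\<^sub>R x + cos t *\<^sub>R e)) has_vector_derivative D2 e x e - D x x) (at 0)"
      for x e t
      using great_circle_derivatives[OF D D2] by (simp_all only: has_real_derivative_iff_has_vector_derivative)
    show "(\<Sum>e\<in>tangent_onb x. D2 e x e - D x x) = - harmonic_eigenvalue DIM('a) k *\<^sub>R p x"
      if "norm x = 1" for x
      using trace_great_circle_harmonic_homogeneous[OF assms(2) _ D D2 that] assms(3) by simp
  qed
  then show ?thesis
    by blast
qed

lemma great_circle_eigenmap_componentwise:
  fixes F :: "'a::euclidean_space \<Rightarrow> 'b::euclidean_space"
  assumes "\<And>b. b \<in> Basis \<Longrightarrow> \<exists>v w. great_circle_eigenmap (\<lambda>x. F x \<bullet> b) v w L"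
  shows "\<exists>V W. great_circle_eigenmap F V W L"
proof -
  obtain v w where vw: "\<And>b. b \<in> Basis \<Longrightarrow> great_circle_eigenmap (\<lambda>x. F x \<bullet> b) (v b) (w b) L"
    using assms by metis
  note v = great_circle_eigenmap.has_velocity[OF vw]
    and w = great_circle_eigenmap.has_acceleration[OF vw]
    and trace = great_circle_eigenmap.trace_acceleration[OF vw]
  have "great_circle_eigenmap F (\<lambda>x e t. \<Sum>b\<in>Basis. v b x e t *\<^sub>R b) (\<lambda>x e. \<Sum>b\<in>Basis. w b x e *\<^sub>R b) L"
  proof
    have "(\<lambda>t. F (geod x e t)) = (\<lambda>t. \<Sum>b\<in>Basis. (F (geod x e t) \<bullet> b) *\<^sub>R b)" for x e
      by (simp add: euclidean_representation)
    then show "((\<lambda>t. F (geod x e t)) has_vector_derivative (\<Sum>b\<in>Basis. v b x e t *\<^sub>R b)) (at t)"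
      for x e t
      using v by (auto intro!: derivative_eq_intros simp: has_real_derivative_iff_has_vector_derivative)
    show "((\<lambda>t. \<Sum>b\<in>Basis. v b x e t *\<^sub>R b) has_vector_derivative (\<Sum>b\<in>Basis. w b x e *\<^sub>R b)) (at 0)"
      for x e
      using w by (auto intro!: derivative_eq_intros simp: has_real_derivative_iff_has_vector_derivative)
    show "(\<Sum>e\<in>tangent_onb x. \<Sum>b\<in>Basis. w b x e *\<^sub>R b) = - L *\<^sub>R F x" if "norm x = 1" for x
    proof -
      have "(\<Sum>e\<in>tangent_onb x. \<Sum>b\<in>Basis. w b x e *\<^sub>R b) = (\<Sum>b\<in>Basis. (- L * (F x \<bullet> b)) *\<^sub>R b)"
        using trace that by (subst sum.swap) (simp add: scaleR_sum_left[symmetric])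
      also have "\<dots> = - L *\<^sub>R F x"
        by (simp only: scaleR_scaleR[symmetric] scaleR_sum_right[symmetric] euclidean_representation)
      finally show ?thesis .
    qed
  qed
  then show ?thesis
    by blast
qed

lemma harmonic_form_great_circle_eigenmap:
  fixes F :: "'a::euclidean_space \<Rightarrow> 'b::euclidean_space"
  assumes "harmonic_form k F"
  shows "\<exists>V W. great_circle_eigenmap F V W (harmonic_eigenvalue DIM('a) k)"
proof (rule great_circle_eigenmap_componentwise)
  fix b :: 'b
  assume "b \<in> Basis"
  then show "\<exists>v w. great_circle_eigenmap (\<lambda>x. F x \<bullet> b) v w (harmonic_eigenvalue DIM('a) k)"
    using assms unfolding harmonic_form_def by (intro harmonic_polynomial_great_circle_eigenmap) simp_all
qed

lemma tproj_Pair_scaleR: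
  "tproj (u1, u2) (c1 *\<^sub>R u1, c2 *\<^sub>R u2) =
    ((c1 - (c1 * (u1 \<bullet> u1) + c2 * (u2 \<bullet> u2))) *\<^sub>R u1,
     (c2 - (c1 * (u1 \<bullet> u1) + c2 * (u2 \<bullet> u2))) *\<^sub>R u2)"
  by (simp add: tproj_def algebra_simps)

lemma tproj_sum: "tproj p (sum f A) = (\<Sum>a\<in>A. tproj p (f a))"
  by (simp add: tproj_def sum_subtractf inner_sum_left scaleR_sum_left)

lemma sum_Pair: "(\<Sum>a\<in>A. (f a, g a)) = (sum f A, sum g A)"
  by (simp add: prod_eq_iff fst_sum snd_sum)

locale sphere_eigenmap = great_circle_eigenmap F V W L
  for F :: "'a::euclidean_space \<Rightarrow> 'b::real_inner" and V W L +
  fixes r :: real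
  assumes norm_on_sphere: "\<And>x. norm x = 1 \<Longrightarrow> norm (F x) = r"
begin

lemma inner_self_on_sphere: "norm x = 1 \<Longrightarrow> F x \<bullet> F x = r\<^sup>2"
  using norm_on_sphere by (simp flip: power2_norm_eq_inner)

lemma
  assumes "norm x = 1" "e \<in> tangent_onb x"
  shows velocity_orthogonal: "F (geod x e t) \<bullet> V x e t = 0"
    and velocity_acceleration: "V x e 0 \<bullet> V x e 0 + F x \<bullet> W x e = 0"
  using constant_norm_curve_derivatives[OF has_velocity has_acceleration, of x e "r\<^sup>2"]
    inner_self_on_sphere norm_geod_tangent_onb[OF assms]
  by auto

lemma sum_velocity_sq: "norm x = 1 \<Longrightarrow> (\<Sum>e\<in>tangent_onb x. V x e 0 \<bullet> V x e 0) = L * r\<^sup>2"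
  by (simp add: velocity_acceleration[THEN eq_neg_iff_add_eq_0[THEN iffD2], of x] sum_negf
      inner_sum_right[symmetric] trace_acceleration inner_self_on_sphere)

end

locale eigenmap_pair =
  m1: sphere_eigenmap F1 V1 W1 L1 r1 + m2: sphere_eigenmap F2 V2 W2 L2 r2
  for F1 :: "'a::euclidean_space \<Rightarrow> 'b::real_inner" and V1 W1 L1 r1
    and F2 :: "'a \<Rightarrow> 'c::real_inner" and V2 W2 L2 r2 +
  assumes radii: "r1\<^sup>2 + r2\<^sup>2 = 1"
begin

lemma velocity_Pair:
  "vector_derivative (\<lambda>s. (F1 (geod x e s), F2 (geod x e s))) (at t) = (V1 x e t, V2 x e t)"
  by (rule vector_derivative_at[OF has_vector_derivative_Pair[OF m1.has_velocity m2.has_velocity]])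

lemma dmap_Pair: "dmap (\<lambda>x. (F1 x, F2 x)) x e = (V1 x e 0, V2 x e 0)"
  unfolding dmap_def velocity_Pair ..

lemma second_along_Pair: "second_along (\<lambda>x. (F1 x, F2 x)) x e = (W1 x e, W2 x e)"
  unfolding second_along_def velocity_Pair
  by (rule vector_derivative_at[OF has_vector_derivative_Pair[OF m1.has_acceleration m2.has_acceleration]])

lemma tension_Pair:
  assumes "norm x = 1"
  shows "tension (\<lambda>x. (F1 x, F2 x)) x = ((r2\<^sup>2 * (L2 - L1)) *\<^sub>R F1 x, (r1\<^sup>2 * (L1 - L2)) *\<^sub>R F2 x)"
proof -
  have "tension (\<lambda>x. (F1 x, F2 x)) x = tproj (F1 x, F2 x) ((- L1) *\<^sub>R F1 x, (- L2) *\<^sub>R F2 x)"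
    using assms
    by (simp add: tension_def second_along_Pair sum_Pair m1.trace_acceleration m2.trace_acceleration
        flip: tproj_sum)
  also have "\<dots> = ((- L1 - (- L1 * r1\<^sup>2 + - L2 * r2\<^sup>2)) *\<^sub>R F1 x,
      (- L2 - (- L1 * r1\<^sup>2 + - L2 * r2\<^sup>2)) *\<^sub>R F2 x)"
    unfolding tproj_Pair_scaleR m1.inner_self_on_sphere[OF assms] m2.inner_self_on_sphere[OF assms] ..
  also have "\<dots> = ((r2\<^sup>2 * (L2 - L1)) *\<^sub>R F1 x, (r1\<^sup>2 * (L1 - L2)) *\<^sub>R F2 x)"
  proof -
    have "- L1 - (- L1 * r1\<^sup>2 + - L2 * r2\<^sup>2) = r2\<^sup>2 * (L2 - L1)"
      "- L2 - (- L1 * r1\<^sup>2 + - L2 * r2\<^sup>2) = r1\<^sup>2 * (L1 - L2)"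
      using radii by algebra+
    then show ?thesis by simp
  qed
  finally show ?thesis .
qed

lemma covd_along_tension_Pair:
  assumes x: "norm x = 1" and e: "e \<in> tangent_onb x"
  shows "covd_along (\<lambda>x. (F1 x, F2 x)) (tension (\<lambda>x. (F1 x, F2 x))) x e t =
    ((r2\<^sup>2 * (L2 - L1)) *\<^sub>R V1 x e t, (r1\<^sup>2 * (L1 - L2)) *\<^sub>R V2 x e t)"
proof -
  define a b where "a = r2\<^sup>2 * (L2 - L1)" and "b = r1\<^sup>2 * (L1 - L2)"
  have "(\<lambda>s. tension (\<lambda>x. (F1 x, F2 x)) (geod x e s)) =
      (\<lambda>s. (a *\<^sub>R F1 (geod x e s), b *\<^sub>R F2 (geod x e s)))"
    using tension_Pair norm_geod_tangent_onb[OF x e] by (simp add: a_def b_def)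
  then have "vector_derivative (\<lambda>s. tension (\<lambda>x. (F1 x, F2 x)) (geod x e s)) (at t) =
      (a *\<^sub>R V1 x e t, b *\<^sub>R V2 x e t)"
    by (auto intro!: vector_derivative_at derivative_eq_intros m1.has_velocity m2.has_velocity)
  then show ?thesis
    using m1.velocity_orthogonal[OF x e] m2.velocity_orthogonal[OF x e]
    by (simp add: covd_along_def tproj_def inner_commute a_def b_def)
qed

lemma rough_trace_tension_Pair:
  assumes x: "norm x = 1"
  shows "rough_trace (\<lambda>x. (F1 x, F2 x)) (tension (\<lambda>x. (F1 x, F2 x))) x =
    tproj (F1 x, F2 x) ((- r2\<^sup>2 * (L2 - L1) * L1) *\<^sub>R F1 x, (- r1\<^sup>2 * (L1 - L2) * L2) *\<^sub>R F2 x)"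
proof -
  define a b where "a = r2\<^sup>2 * (L2 - L1)" and "b = r1\<^sup>2 * (L1 - L2)"
  have "vector_derivative (covd_along (\<lambda>x. (F1 x, F2 x)) (tension (\<lambda>x. (F1 x, F2 x))) x e) (at 0) =
      (a *\<^sub>R W1 x e, b *\<^sub>R W2 x e)" if "e \<in> tangent_onb x" for e
    unfolding covd_along_tension_Pair[OF x that, folded a_def b_def, abs_def]
    by (auto intro!: vector_derivative_at derivative_eq_intros m1.has_acceleration m2.has_acceleration)
  then have "rough_trace (\<lambda>x. (F1 x, F2 x)) (tension (\<lambda>x. (F1 x, F2 x))) x =
      tproj (F1 x, F2 x) (\<Sum>e\<in>tangent_onb x. (a *\<^sub>R W1 x e, b *\<^sub>R W2 x e))"
    by (simp add: rough_trace_def tproj_sum)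
  also have "\<dots> = tproj (F1 x, F2 x) ((- a * L1) *\<^sub>R F1 x, (- b * L2) *\<^sub>R F2 x)"
    using x by (simp add: sum_Pair m1.trace_acceleration m2.trace_acceleration flip: scaleR_sum_right)
  finally show ?thesis
    by (simp add: a_def b_def)
qed

text \<open>Since \<open>d\<phi>\<close> is orthogonal to \<open>\<tau>(\<phi>)\<close>, the curvature term is \<open>-|d\<phi>|\<^sup>2 \<tau>(\<phi>)\<close>.\<close>

lemma curvature_term_Pair:
  assumes x: "norm x = 1"
  shows "(\<Sum>e\<in>tangent_onb x. sphere_curv (dmap (\<lambda>x. (F1 x, F2 x)) x e)
      (tension (\<lambda>x. (F1 x, F2 x)) x) (dmap (\<lambda>x. (F1 x, F2 x)) x e)) =
    (- (L1 * r1\<^sup>2 + L2 * r2\<^sup>2)) *\<^sub>R tension (\<lambda>x. (F1 x, F2 x)) x"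
proof -
  have "(\<Sum>e\<in>tangent_onb x. sphere_curv (dmap (\<lambda>x. (F1 x, F2 x)) x e)
      (tension (\<lambda>x. (F1 x, F2 x)) x) (dmap (\<lambda>x. (F1 x, F2 x)) x e)) =
    (\<Sum>e\<in>tangent_onb x. (- (V1 x e 0 \<bullet> V1 x e 0 + V2 x e 0 \<bullet> V2 x e 0)) *\<^sub>R
      tension (\<lambda>x. (F1 x, F2 x)) x)"
  proof (rule sum.cong[OF refl])
    fix e
    assume "e \<in> tangent_onb x"
    then show "sphere_curv (dmap (\<lambda>x. (F1 x, F2 x)) x e) (tension (\<lambda>x. (F1 x, F2 x)) x)
        (dmap (\<lambda>x. (F1 x, F2 x)) x e) =
      (- (V1 x e 0 \<bullet> V1 x e 0 + V2 x e 0 \<bullet> V2 x e 0)) *\<^sub>R tension (\<lambda>x. (F1 x, F2 x)) x"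
      using m1.velocity_orthogonal[OF x, of e 0] m2.velocity_orthogonal[OF x, of e 0]
      by (simp add: sphere_curv_def dmap_Pair tension_Pair[OF x] inner_commute)
        (simp add: algebra_simps)
  qed
  also have "\<dots> = (- (\<Sum>e\<in>tangent_onb x. V1 x e 0 \<bullet> V1 x e 0 + V2 x e 0 \<bullet> V2 x e 0)) *\<^sub>R
      tension (\<lambda>x. (F1 x, F2 x)) x"
    by (simp only: scaleR_sum_left[symmetric] sum_negf)
  also have "\<dots> = (- (L1 * r1\<^sup>2 + L2 * r2\<^sup>2)) *\<^sub>R tension (\<lambda>x. (F1 x, F2 x)) x"
    using x by (simp add: sum.distrib m1.sum_velocity_sq m2.sum_velocity_sq)
  finally show ?thesis .
qed

lemma bitension_Pair:
  assumes x: "norm x = 1"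
  shows "bitension (\<lambda>x. (F1 x, F2 x)) x =
    ((r2\<^sup>2 * (L2 - L1)\<^sup>2 * (r2\<^sup>2 - r1\<^sup>2)) *\<^sub>R F1 x, (r1\<^sup>2 * (L1 - L2)\<^sup>2 * (r1\<^sup>2 - r2\<^sup>2)) *\<^sub>R F2 x)"
proof -
  define a b E where "a = r2\<^sup>2 * (L2 - L1)" and "b = r1\<^sup>2 * (L1 - L2)" and "E = L1 * r1\<^sup>2 + L2 * r2\<^sup>2"
  have "bitension (\<lambda>x. (F1 x, F2 x)) x =
      tproj (F1 x, F2 x) ((- a * L1) *\<^sub>R F1 x, (- b * L2) *\<^sub>R F2 x) - (- E) *\<^sub>R (a *\<^sub>R F1 x, b *\<^sub>R F2 x)"
    unfolding bitension_def rough_trace_tension_Pair[OF x] curvature_term_Pair[OF x]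
    unfolding tension_Pair[OF x] by (simp add: a_def b_def E_def)
  also have "\<dots> = ((- a * L1 - (- a * L1 * r1\<^sup>2 + - b * L2 * r2\<^sup>2) + E * a) *\<^sub>R F1 x,
      (- b * L2 - (- a * L1 * r1\<^sup>2 + - b * L2 * r2\<^sup>2) + E * b) *\<^sub>R F2 x)"
    unfolding tproj_Pair_scaleR m1.inner_self_on_sphere[OF x] m2.inner_self_on_sphere[OF x]
    by (simp add: algebra_simps)
  also have "\<dots> = ((r2\<^sup>2 * (L2 - L1)\<^sup>2 * (r2\<^sup>2 - r1\<^sup>2)) *\<^sub>R F1 x,
      (r1\<^sup>2 * (L1 - L2)\<^sup>2 * (r1\<^sup>2 - r2\<^sup>2)) *\<^sub>R F2 x)"
  proof -
    have "- a * L1 - (- a * L1 * r1\<^sup>2 + - b * L2 * r2\<^sup>2) + E * a = r2\<^sup>2 * (L2 - L1)\<^sup>2 * (r2\<^sup>2 - r1\<^sup>2)"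
      "- b * L2 - (- a * L1 * r1\<^sup>2 + - b * L2 * r2\<^sup>2) + E * b = r1\<^sup>2 * (L1 - L2)\<^sup>2 * (r1\<^sup>2 - r2\<^sup>2)"
      unfolding a_def b_def E_def using radii by algebra+
    then show ?thesis by simp
  qed
  finally show ?thesis .
qed

lemma Pair_vanishes_on_sphere_iff:
  assumes "r1 > 0" "r2 > 0" and G: "\<And>x. norm x = 1 \<Longrightarrow> G x = (c1 *\<^sub>R F1 x, c2 *\<^sub>R F2 x)"
  shows "(\<forall>x\<in>sphere 0 1. G x = 0) \<longleftrightarrow> c1 = 0 \<and> c2 = 0"
proof
  obtain x0 :: 'a where x0: "norm x0 = 1"
    using norm_Basis nonempty_Basis by blast
  assume "\<forall>x\<in>sphere 0 1. G x = 0"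
  then have "(c1 *\<^sub>R F1 x0, c2 *\<^sub>R F2 x0) = 0"
    using G x0 by simp
  moreover have "F1 x0 \<noteq> 0" "F2 x0 \<noteq> 0"
    using m1.norm_on_sphere[OF x0] m2.norm_on_sphere[OF x0] assms(1,2) by auto
  ultimately show "c1 = 0 \<and> c2 = 0"
    by (simp add: zero_prod_def)
qed (simp add: G zero_prod_def)

lemma proper_biharmonic_Pair_iff:
  assumes "r1 > 0" "r2 > 0"
  shows "proper_biharmonic (\<lambda>x. (F1 x, F2 x)) \<longleftrightarrow> r1 = 1 / sqrt 2 \<and> r2 = 1 / sqrt 2 \<and> L1 \<noteq> L2"
proof -
  have "proper_biharmonic (\<lambda>x. (F1 x, F2 x)) \<longleftrightarrow> r1\<^sup>2 = r2\<^sup>2 \<and> L1 \<noteq> L2"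
    unfolding proper_biharmonic_def
    using Pair_vanishes_on_sphere_iff[OF assms tension_Pair]
      Pair_vanishes_on_sphere_iff[OF assms bitension_Pair] assms
    by auto
  also have "r1\<^sup>2 = r2\<^sup>2 \<longleftrightarrow> r1 = 1 / sqrt 2 \<and> r2 = 1 / sqrt 2"
  proof
    assume "r1\<^sup>2 = r2\<^sup>2"
    then have "r1 = sqrt (1 / 2)" "r2 = sqrt (1 / 2)"
      using radii assms by (auto intro!: real_sqrt_unique[symmetric])
    then show "r1 = 1 / sqrt 2 \<and> r2 = 1 / sqrt 2"
      by (simp add: real_sqrt_divide)
  qed simp
  finally show ?thesis
    by simp
qed

end

theorem mainTheorem8:
  fixes F1 :: "'a::euclidean_space \<Rightarrow> 'b::euclidean_space"
    and F2 :: "'a \<Rightarrow> 'c::euclidean_space"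
    and k1 k2 :: nat and r1 r2 :: real
  assumes "DIM('a) \<ge> 2"
    and "r1 > 0" and "r2 > 0" and "r1\<^sup>2 + r2\<^sup>2 = 1"
    and "harmonic_form k1 F1" and "harmonic_form k2 F2"
    and "\<forall>x. (norm (F1 x))\<^sup>2 = r1\<^sup>2 * norm x ^ (2 * k1)"
    and "\<forall>x. (norm (F2 x))\<^sup>2 = r2\<^sup>2 * norm x ^ (2 * k2)"
  shows "proper_biharmonic (\<lambda>x. (F1 x, F2 x)) \<longleftrightarrow>
           r1 = 1 / sqrt 2 \<and> r2 = 1 / sqrt 2 \<and> k1 \<noteq> k2"
proof -
  obtain V1 W1 V2 W2
    where "great_circle_eigenmap F1 V1 W1 (harmonic_eigenvalue DIM('a) k1)"
      and "great_circle_eigenmap F2 V2 W2 (harmonic_eigenvalue DIM('a) k2)"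
    using harmonic_form_great_circle_eigenmap assms(5,6) by metis
  moreover have "norm (F1 x) = r1" and "norm (F2 x) = r2" if "norm x = 1" for x
  proof -
    have "(norm (F1 x))\<^sup>2 = r1\<^sup>2" "(norm (F2 x))\<^sup>2 = r2\<^sup>2"
      using assms(7,8) that by simp_all
    then show "norm (F1 x) = r1" "norm (F2 x) = r2"
      using assms(2,3) by (simp_all add: power2_eq_iff_nonneg)
  qed
  ultimately interpret eigenmap_pair F1 V1 W1 "harmonic_eigenvalue DIM('a) k1" r1
      F2 V2 W2 "harmonic_eigenvalue DIM('a) k2" r2
    using assms(4)
    by (simp add: eigenmap_pair_def eigenmap_pair_axioms_def sphere_eigenmap_def sphere_eigenmap_axioms_def)
  show ?thesis
    using proper_biharmonic_Pair_iff[OF assms(2,3)] harmonic_eigenvalue_eq_iff[OF assms(1)] by simp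
qed

end
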